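(* Let $\alpha>1$, $V(x)=|x|^\alpha/\alpha$, and let $\mu$ be the probability measure $d\mu(x)=Z^{-1}e^{-V(x)}dx$ on $\mathbb{R}$ ($Z$ a normalizing constant). Let $\nu$ be the symmetric exponential measure $d\nu(x)=\frac12e^{-|x|}dx$ and let $t:\mathbb{R}\to\mathbb{R}$ be the monotone rearrangement map pushing $\nu$ to $\mu$ (i.e. $G=H\circ t$ with $G,H$ the distribution functions of $\nu,\mu$). Then there is a constant $C_\alpha>0$ depending only on $\alpha$ such that $$|t'\circ t^{-1}(x)|\le\frac{C_\alpha}{V'(|x|)+1},\quad x\in\mathbb{R}.$$ *)

theory Defs
  imports "HOL-Analysis.Analysis"
begin

definition V :: "real \<Rightarrow> real \<Rightarrow> real" where
  "V \<alpha> x = \<bar>x\<bar> powr \<alpha> / \<alpha>"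

definition Zc :: "real \<Rightarrow> real" where
  "Zc \<alpha> = (\<integral>y. exp (- V \<alpha> y) \<partial>lborel)"

definition H :: "real \<Rightarrow> real \<Rightarrow> real" where
  "H \<alpha> x = (LBINT y:{..x}. exp (- V \<alpha> y)) / Zc \<alpha>"

definition G :: "real \<Rightarrow> real" where
  "G x = (LBINT y:{..x}. exp (- \<bar>y\<bar>) / 2)"

end

theory Submission
  imports Defs "HOL-Real_Asymp.Real_Asymp"
begin

text \<open>
  Since G = H o t, the map t is the inverse of H composed with G, so
  t'(s) = g(s) / h(t s) for the densities g(s) = exp(-|s|)/2 and h = exp(-V)/Z.
  For the exponential law g = min(G, 1 - G), and G(s) = H(t s); hence, at x = t s,
  Z t'(s) exp(-V(x)) is the smaller of the two unnormalised masses of the half-lines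
  cut at x. Integrating (exp(-V))' = -V' exp(-V) over the half-line not containing
  the origin bounds that mass by exp(-V(x)) / V'(|x|), while for |x| <= 1 it suffices
  that exp(-V) is bounded below there.
\<close>

section \<open>Half-line integrals\<close>

lemma set_integral_Ioi_FTC_nonneg:
  fixes \<phi> F :: "real \<Rightarrow> real"
  assumes D: "\<And>y. y \<ge> a \<Longrightarrow> (F has_real_derivative \<phi> y) (at y)"
    and C: "\<And>y. y \<ge> a \<Longrightarrow> isCont \<phi> y"
    and N: "\<And>y. y \<ge> a \<Longrightarrow> 0 \<le> \<phi> y"
    and L: "(F \<longlongrightarrow> B) at_top"
  shows "set_integrable lborel {a<..} \<phi>" "(LBINT y:{a<..}. \<phi> y) = B - F a"
proof -
  have A: "((F \<circ> real_of_ereal) \<longlongrightarrow> F a) (at_right (ereal a))"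
    unfolding ereal_tendsto_simps1
    using DERIV_isCont[OF D[of a]] by (simp add: isCont_def filterlim_at_split)
  have B: "((F \<circ> real_of_ereal) \<longlongrightarrow> B) (at_left \<infinity>)"
    unfolding ereal_tendsto_simps1 by (rule L)
  note FTC = interval_integral_FTC_nonneg[of "ereal a" \<infinity> F \<phi>, OF _ _ _ _ A B]
  have "ereal a < \<infinity>" by simp
  moreover have "\<And>x. ereal a < ereal x \<Longrightarrow> ereal x < \<infinity> \<Longrightarrow> DERIV F x :> \<phi> x"
    using D by simp
  moreover have "\<And>x. ereal a < ereal x \<Longrightarrow> ereal x < \<infinity> \<Longrightarrow> isCont \<phi> x"
    using C by simp
  moreover have "AE x in lborel. ereal a < ereal x \<longrightarrow> ereal x < \<infinity> \<longrightarrow> 0 \<le> \<phi> x"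
    using N by simp
  ultimately show "set_integrable lborel {a<..} \<phi>" "(LBINT y:{a<..}. \<phi> y) = B - F a"
    using FTC by (simp_all add: interval_integral_to_infinity_eq)
qed

lemma set_integral_Iic_FTC_nonneg:
  fixes \<phi> F :: "real \<Rightarrow> real"
  assumes D: "\<And>y. y \<le> b \<Longrightarrow> (F has_real_derivative \<phi> y) (at y)"
    and C: "\<And>y. y \<le> b \<Longrightarrow> isCont \<phi> y"
    and N: "\<And>y. y \<le> b \<Longrightarrow> 0 \<le> \<phi> y"
    and L: "(F \<longlongrightarrow> A) at_bot"
  shows "set_integrable lborel {..b} \<phi>" "(LBINT y:{..b}. \<phi> y) = F b - A"
proof -
  have B: "((F \<circ> real_of_ereal) \<longlongrightarrow> F b) (at_left (ereal b))"
    unfolding ereal_tendsto_simps1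
    using DERIV_isCont[OF D[of b]] by (simp add: isCont_def filterlim_at_split)
  have A: "((F \<circ> real_of_ereal) \<longlongrightarrow> A) (at_right (-\<infinity>))"
    unfolding ereal_tendsto_simps1 by (rule L)
  note FTC = interval_integral_FTC_nonneg[of "-\<infinity>" "ereal b" F \<phi>, OF _ _ _ _ A B]
  have "-\<infinity> < ereal b" by simp
  moreover have "\<And>x. -\<infinity> < ereal x \<Longrightarrow> ereal x < ereal b \<Longrightarrow> DERIV F x :> \<phi> x"
    using D by simp
  moreover have "\<And>x. -\<infinity> < ereal x \<Longrightarrow> ereal x < ereal b \<Longrightarrow> isCont \<phi> x"
    using C by simp
  moreover have "AE x in lborel. -\<infinity> < ereal x \<longrightarrow> ereal x < ereal b \<longrightarrow> 0 \<le> \<phi> x"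
    using N by simp
  ultimately have "set_integrable lborel {..<b} \<phi>" "(LBINT y:{..<b}. \<phi> y) = F b - A"
    using FTC by (simp_all add: interval_lebesgue_integral_def)
  moreover have "({..b} - {..<b}) \<union> ({..<b} - {..b}) \<subseteq> {b}" by auto
  ultimately show "set_integrable lborel {..b} \<phi>" "(LBINT y:{..b}. \<phi> y) = F b - A"
    using set_integrable_discrete_difference[of "{b}" "{..b}" "{..<b}" lborel \<phi>]
      set_integral_discrete_difference[of "{b}" "{..b}" "{..<b}" lborel \<phi>] by simp_all
qed

lemma set_integrable_of_integrable:
  fixes \<phi> :: "real \<Rightarrow> real"
  assumes "integrable lborel \<phi>" "A \<in> sets lborel"
  shows "set_integrable lborel A \<phi>"
  using integrable_mult_indicator[of A lborel \<phi>] assms unfolding set_integrable_def by simp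

lemma set_integral_Iic_add_Ioi:
  fixes \<phi> :: "real \<Rightarrow> real"
  assumes "integrable lborel \<phi>"
  shows "(LBINT y:{..x}. \<phi> y) + (LBINT y:{x<..}. \<phi> y) = integral\<^sup>L lborel \<phi>"
proof -
  have "(LBINT y:{..x} \<union> {x<..}. \<phi> y) = (LBINT y:{..x}. \<phi> y) + (LBINT y:{x<..}. \<phi> y)"
    by (rule set_integral_Un) (auto intro: set_integrable_of_integrable assms)
  moreover have "{..x} \<union> {x<..} = (UNIV :: real set)" by auto
  ultimately show ?thesis by (simp add: set_lebesgue_integral_def)
qed

lemma set_integral_nonneg:
  fixes \<phi> :: "real \<Rightarrow> real"
  assumes "\<And>y. y \<in> A \<Longrightarrow> 0 \<le> \<phi> y"
  shows "0 \<le> (LBINT y:A. \<phi> y)"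
  unfolding set_lebesgue_integral_def
  by (rule integral_nonneg_AE) (use assms in \<open>auto simp: indicator_def\<close>)

lemma has_real_derivative_set_integral_Iic:
  fixes \<phi> :: "real \<Rightarrow> real"
  assumes I: "integrable lborel \<phi>" and C: "\<And>y. isCont \<phi> y"
  shows "((\<lambda>u. LBINT y:{..u}. \<phi> y) has_real_derivative \<phi> x) (at x)"
proof -
  define c d where "c = x - 1" and "d = x + 1"
  have "continuous_on {c..d} \<phi>" using C by (simp add: continuous_at_imp_continuous_on)
  then have "((\<lambda>u. LBINT y=c..u. \<phi> y) has_vector_derivative \<phi> x) (at x within {c..d})"
    by (rule interval_integral_FTC2[rotated 2]) (auto simp: c_def d_def)
  then have "((\<lambda>u. LBINT y=c..u. \<phi> y) has_vector_derivative \<phi> x) (at x within {c<..<d})"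
    by (rule has_vector_derivative_within_subset) auto
  then have "((\<lambda>u. LBINT y=c..u. \<phi> y) has_vector_derivative \<phi> x) (at x)"
    by (subst (asm) at_within_open) (auto simp: c_def d_def)
  then have "((\<lambda>u. (LBINT y:{..c}. \<phi> y) + (LBINT y=c..u. \<phi> y)) has_real_derivative \<phi> x) (at x)"
    by (auto intro!: derivative_eq_intros simp: has_real_derivative_iff_has_vector_derivative)
  then show ?thesis
  proof (rule has_field_derivative_transform_within_open[where S = "{c<..<d}"])
    fix u assume u: "u \<in> {c<..<d}"
    have "(LBINT y=c..u. \<phi> y) = (LBINT y:{c<..<u}. \<phi> y)"
      using u by (simp add: interval_integral_Ioo)
    also have "\<dots> = (LBINT y:{c<..u}. \<phi> y)"
      by (rule set_integral_discrete_difference[of "{u}"]) auto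
    finally have "(LBINT y=c..u. \<phi> y) = (LBINT y:{c<..u}. \<phi> y)" .
    moreover have "(LBINT y:{..c} \<union> {c<..u}. \<phi> y) = (LBINT y:{..c}. \<phi> y) + (LBINT y:{c<..u}. \<phi> y)"
      by (rule set_integral_Un) (auto intro: set_integrable_of_integrable I)
    moreover have "{..c} \<union> {c<..u} = {..u}" using u by auto
    ultimately show "(LBINT y:{..c}. \<phi> y) + (LBINT y=c..u. \<phi> y) = (LBINT y:{..u}. \<phi> y)"
      by simp
  qed (auto simp: c_def d_def)
qed

lemma strict_mono_set_integral_Iic:
  fixes \<phi> :: "real \<Rightarrow> real"
  assumes "integrable lborel \<phi>" "\<And>y. isCont \<phi> y" "\<And>y. \<phi> y > 0"
  shows "strict_mono (\<lambda>u. LBINT y:{..u}. \<phi> y)"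
  using DERIV_pos_imp_increasing has_real_derivative_set_integral_Iic[OF assms(1,2)] assms(3)
  unfolding strict_mono_def by blast

section \<open>Monotone rearrangement\<close>

lemma rearrangement_surj:
  assumes "inj K" "range K \<subseteq> range F" "\<And>x. F x = K (t x)"
  shows "surj t"
proof -
  have "\<exists>s. x = t s" for x
  proof -
    obtain s where "F s = K x" using assms(2) by (metis rangeE rangeI subsetD)
    then have "x = t s" using assms(1,3) by (metis injD)
    then show ?thesis ..
  qed
  then show ?thesis by (simp add: surj_def)
qed

lemma rearrangement_has_real_derivative:
  fixes F K t :: "real \<Rightarrow> real"
  assumes K: "inj K" "\<And>y. (K has_real_derivative k y) (at y)" and k: "k (t s) \<noteq> 0"
    and F: "(F has_real_derivative f) (at s)"
    and FKt: "\<And>x. F x = K (t x)"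
  shows "(t has_real_derivative f / k (t s)) (at s)"
proof -
  have t: "t = inv K \<circ> F" using FKt K(1) by (simp add: fun_eq_iff)
  have "continuous_on UNIV K"
    using K(2) by (meson DERIV_isCont continuous_at_imp_continuous_on)
  moreover have "(K has_derivative (*) (k (t s))) (at (t s))"
    using K(2) by (simp add: has_field_derivative_def mult.commute)
  moreover have "(*) (k (t s)) \<circ> (*) (inverse (k (t s))) = id"
    using k by (simp add: fun_eq_iff)
  ultimately have "(inv K has_derivative (*) (inverse (k (t s)))) (at (K (t s)))"
    using has_derivative_inverse_strong[of UNIV "t s" K "inv K"] K(1) by simp
  then have "(inv K has_real_derivative inverse (k (t s))) (at (F s))"
    by (simp add: has_field_derivative_def mult.commute FKt)
  from DERIV_chain[OF this F] show ?thesis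
    by (simp add: t[symmetric] field_simps)
qed

section \<open>The symmetric exponential law\<close>

definition laplace_density :: "real \<Rightarrow> real" where
  "laplace_density y = exp (- \<bar>y\<bar>) / 2"

lemma G_eq_set_integral: "G x = (LBINT y:{..x}. laplace_density y)"
  unfolding G_def laplace_density_def ..

lemma laplace_density_pos: "laplace_density y > 0"
  by (simp add: laplace_density_def)

lemma isCont_laplace_density: "isCont laplace_density y"
  unfolding laplace_density_def by (auto intro!: continuous_intros)

lemma laplace_density_Iic:
  assumes "b \<le> 0"
  shows "set_integrable lborel {..b} laplace_density"
    "(LBINT y:{..b}. laplace_density y) = exp b / 2"
proof -
  have "((\<lambda>y. exp y / 2) has_real_derivative laplace_density y) (at y)" if "y \<le> b" for y
    using that assms by (auto intro!: derivative_eq_intros simp: laplace_density_def)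
  moreover have "((\<lambda>y::real. exp y / 2) \<longlongrightarrow> 0) at_bot"
    by (intro tendsto_divide_zero exp_at_bot)
  ultimately show "set_integrable lborel {..b} laplace_density"
    "(LBINT y:{..b}. laplace_density y) = exp b / 2"
    using set_integral_Iic_FTC_nonneg[of b "\<lambda>y. exp y / 2" laplace_density 0]
      isCont_laplace_density less_imp_le[OF laplace_density_pos] by auto
qed

lemma laplace_density_Ioi:
  assumes "a \<ge> 0"
  shows "set_integrable lborel {a<..} laplace_density"
    "(LBINT y:{a<..}. laplace_density y) = exp (- a) / 2"
proof -
  have "((\<lambda>y. - (exp (- y) / 2)) has_real_derivative laplace_density y) (at y)" if "y \<ge> a" for y
    using that assms by (auto intro!: derivative_eq_intros simp: laplace_density_def)
  moreover have "((\<lambda>y::real. - (exp (- y) / 2)) \<longlongrightarrow> 0) at_top"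
    by real_asymp
  ultimately show "set_integrable lborel {a<..} laplace_density"
    "(LBINT y:{a<..}. laplace_density y) = exp (- a) / 2"
    using set_integral_Ioi_FTC_nonneg[of a "\<lambda>y. - (exp (- y) / 2)" laplace_density 0]
      isCont_laplace_density less_imp_le[OF laplace_density_pos] by auto
qed

lemma integrable_laplace_density: "integrable lborel laplace_density"
proof -
  have "set_integrable lborel ({..0} \<union> {0<..}) laplace_density"
    by (intro set_integrable_Un laplace_density_Iic(1) laplace_density_Ioi(1)) auto
  moreover have "{..0} \<union> {0<..} = (UNIV :: real set)" by auto
  ultimately show ?thesis by (simp add: set_integrable_def)
qed

lemma G_nonpos: "s \<le> 0 \<Longrightarrow> G s = exp s / 2"
  using laplace_density_Iic(2) by (simp add: G_eq_set_integral)

lemma G_nonneg: "s \<ge> 0 \<Longrightarrow> G s = 1 - exp (- s) / 2"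
proof -
  assume s: "s \<ge> 0"
  note split = set_integral_Iic_add_Ioi[OF integrable_laplace_density]
  have "integral\<^sup>L lborel laplace_density = 1"
    using split[of 0] laplace_density_Iic(2)[of 0] laplace_density_Ioi(2)[of 0] by simp
  then have "G s + exp (- s) / 2 = 1"
    using split[of s] laplace_density_Ioi(2)[OF s] unfolding G_eq_set_integral by linarith
  then show ?thesis by linarith
qed

lemma G_has_real_derivative: "(G has_real_derivative laplace_density x) (at x)"
  using has_real_derivative_set_integral_Iic[OF integrable_laplace_density isCont_laplace_density]
  by (simp add: G_eq_set_integral[abs_def])

lemma laplace_density_eq_min: "laplace_density s = min (G s) (1 - G s)"
  by (cases "s \<le> 0") (simp_all add: G_nonpos G_nonneg laplace_density_def)

lemma range_G: "{0<..<1} \<subseteq> range G"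
proof
  fix y :: real assume y: "y \<in> {0<..<1}"
  show "y \<in> range G"
  proof (cases "y \<le> 1 / 2")
    case True
    then have "G (ln (2 * y)) = y" using y by (subst G_nonpos) auto
    then show ?thesis by (metis rangeI)
  next
    case False
    then have "G (- ln (2 * (1 - y))) = y" using y by (subst G_nonneg) (auto simp: field_simps)
    then show ?thesis by (metis rangeI)
  qed
qed

section \<open>The potential and the density of \<open>\<mu>\<close>\<close>

definition gibbs_weight :: "real \<Rightarrow> real \<Rightarrow> real" where
  "gibbs_weight \<alpha> y = exp (- V \<alpha> y)"

lemma gibbs_weight_pos: "gibbs_weight \<alpha> y > 0"
  by (simp add: gibbs_weight_def)

lemma H_eq_set_integral: "H \<alpha> x = (LBINT y:{..x}. gibbs_weight \<alpha> y) / Zc \<alpha>"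
  unfolding H_def gibbs_weight_def ..

lemma Zc_eq_integral: "Zc \<alpha> = integral\<^sup>L lborel (gibbs_weight \<alpha>)"
  unfolding Zc_def gibbs_weight_def ..

context
  fixes \<alpha> :: real
  assumes \<alpha>: "\<alpha> > 1"
begin

lemma V_has_real_derivative:
  "(V \<alpha> has_real_derivative sgn y * \<bar>y\<bar> powr (\<alpha> - 1)) (at y)"
proof -
  consider "y > 0" | "y < 0" | "y = 0" by linarith
  then show ?thesis
  proof cases
    case 1
    have "((\<lambda>z. z powr \<alpha> / \<alpha>) has_real_derivative \<alpha> * y powr (\<alpha> - 1) / \<alpha>) (at y)"
      using 1 by (auto intro!: derivative_eq_intros)
    then have "((\<lambda>z. z powr \<alpha> / \<alpha>) has_real_derivative sgn y * \<bar>y\<bar> powr (\<alpha> - 1)) (at y)"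
      using 1 \<alpha> by simp
    then show ?thesis
      by (rule has_field_derivative_transform_within_open[where S = "{0<..}"])
         (use 1 in \<open>auto simp: V_def\<close>)
  next
    case 2
    have "((\<lambda>z. (- z) powr \<alpha> / \<alpha>) has_real_derivative \<alpha> * (- y) powr (\<alpha> - 1) * (- 1) / \<alpha>) (at y)"
      using 2 by (auto intro!: derivative_eq_intros)
    then have "((\<lambda>z. (- z) powr \<alpha> / \<alpha>) has_real_derivative sgn y * \<bar>y\<bar> powr (\<alpha> - 1)) (at y)"
      using 2 \<alpha> by simp
    then show ?thesis
      by (rule has_field_derivative_transform_within_open[where S = "{..<0}"])
         (use 2 in \<open>auto simp: V_def\<close>)
  next
    case 3
    have lim: "((\<lambda>z. \<bar>z\<bar> powr (\<alpha> - 1) / \<alpha>) \<longlongrightarrow> 0) (at 0)"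
      by (intro tendsto_divide_zero tendsto_zero_powrI) (use \<alpha> in \<open>auto intro!: tendsto_eq_intros\<close>)
    have "\<bar>(V \<alpha> z - V \<alpha> 0) / (z - 0)\<bar> \<le> \<bar>z\<bar> powr (\<alpha> - 1) / \<alpha>" for z
    proof (cases "z = 0")
      case False
      then have "\<bar>z\<bar> powr \<alpha> = \<bar>z\<bar> powr (\<alpha> - 1) * \<bar>z\<bar>"
        using powr_add[of "\<bar>z\<bar>" "\<alpha> - 1" 1] by simp
      then show ?thesis using False \<alpha> by (simp add: V_def abs_divide abs_mult)
    qed simp
    then have "((\<lambda>z. (V \<alpha> z - V \<alpha> 0) / (z - 0)) \<longlongrightarrow> 0) (at 0)"
      by (intro Lim_null_comparison[OF _ lim] always_eventually) auto
    then show ?thesis using 3 by (simp add: has_field_derivative_iff)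
  qed
qed

lemma deriv_V_abs: "deriv (V \<alpha>) \<bar>x\<bar> = \<bar>x\<bar> powr (\<alpha> - 1)"
  using DERIV_imp_deriv[OF V_has_real_derivative[of "\<bar>x\<bar>"]] by (cases "x = 0") auto


lemma gibbs_weight_has_real_derivative:
  "(gibbs_weight \<alpha> has_real_derivative - (sgn y * \<bar>y\<bar> powr (\<alpha> - 1)) * gibbs_weight \<alpha> y) (at y)"
  unfolding gibbs_weight_def using V_has_real_derivative[of y]
  by (auto intro!: derivative_eq_intros)

lemma isCont_gibbs_weight: "isCont (gibbs_weight \<alpha>) y"
  using DERIV_isCont[OF gibbs_weight_has_real_derivative] .

lemma gibbs_weight_at_top: "(gibbs_weight \<alpha> \<longlongrightarrow> 0) at_top"
proof (rule Lim_transform_eventually)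
  show "((\<lambda>y. exp (- (y powr \<alpha> / \<alpha>))) \<longlongrightarrow> 0) at_top"
    using \<alpha> by real_asymp
  show "\<forall>\<^sub>F y in at_top. exp (- (y powr \<alpha> / \<alpha>)) = gibbs_weight \<alpha> y"
    using eventually_ge_at_top[of 0] by eventually_elim (simp add: gibbs_weight_def V_def)
qed

lemma gibbs_weight_at_bot: "(gibbs_weight \<alpha> \<longlongrightarrow> 0) at_bot"
proof -
  have "gibbs_weight \<alpha> (- y) = gibbs_weight \<alpha> y" for y
    by (simp add: gibbs_weight_def V_def)
  then show ?thesis
    using gibbs_weight_at_top unfolding filterlim_at_bot_mirror by simp
qed

lemma isCont_abs_powr:
  fixes \<beta> :: real
  assumes "\<beta> > 0"
  shows "isCont (\<lambda>y. \<bar>y\<bar> powr \<beta>) y"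
proof -
  have "continuous_on UNIV (\<lambda>y::real. \<bar>y\<bar> powr \<beta>)"
    by (rule continuous_on_powr') (use assms in \<open>auto intro!: continuous_intros\<close>)
  then show ?thesis by (simp add: continuous_on_eq_continuous_at)
qed

lemma gibbs_moment_Ioi:
  assumes "a \<ge> 0"
  shows "set_integrable lborel {a<..} (\<lambda>y. \<bar>y\<bar> powr (\<alpha> - 1) * gibbs_weight \<alpha> y)"
    "(LBINT y:{a<..}. \<bar>y\<bar> powr (\<alpha> - 1) * gibbs_weight \<alpha> y) = gibbs_weight \<alpha> a"
proof -
  have "((\<lambda>y. - gibbs_weight \<alpha> y) has_real_derivative \<bar>y\<bar> powr (\<alpha> - 1) * gibbs_weight \<alpha> y) (at y)"
    if "y \<ge> a" for y
    using gibbs_weight_has_real_derivative[of y] that assms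
    by (auto intro!: derivative_eq_intros simp: sgn_if)
  moreover have "((\<lambda>y. - gibbs_weight \<alpha> y) \<longlongrightarrow> 0) at_top"
    using tendsto_minus[OF gibbs_weight_at_top] by simp
  ultimately show "set_integrable lborel {a<..} (\<lambda>y. \<bar>y\<bar> powr (\<alpha> - 1) * gibbs_weight \<alpha> y)"
    "(LBINT y:{a<..}. \<bar>y\<bar> powr (\<alpha> - 1) * gibbs_weight \<alpha> y) = gibbs_weight \<alpha> a"
    using set_integral_Ioi_FTC_nonneg[of a "\<lambda>y. - gibbs_weight \<alpha> y" _ 0] \<alpha>
      isCont_abs_powr[of "\<alpha> - 1"] isCont_gibbs_weight less_imp_le[OF gibbs_weight_pos]
    by auto
qed

lemma gibbs_moment_Iic:
  assumes "b \<le> 0"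
  shows "set_integrable lborel {..b} (\<lambda>y. \<bar>y\<bar> powr (\<alpha> - 1) * gibbs_weight \<alpha> y)"
    "(LBINT y:{..b}. \<bar>y\<bar> powr (\<alpha> - 1) * gibbs_weight \<alpha> y) = gibbs_weight \<alpha> b"
proof -
  have "(gibbs_weight \<alpha> has_real_derivative \<bar>y\<bar> powr (\<alpha> - 1) * gibbs_weight \<alpha> y) (at y)"
    if "y \<le> b" for y
    using gibbs_weight_has_real_derivative[of y] that assms by (cases "y = 0") (auto simp: sgn_if)
  then show "set_integrable lborel {..b} (\<lambda>y. \<bar>y\<bar> powr (\<alpha> - 1) * gibbs_weight \<alpha> y)"
    "(LBINT y:{..b}. \<bar>y\<bar> powr (\<alpha> - 1) * gibbs_weight \<alpha> y) = gibbs_weight \<alpha> b"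
    using set_integral_Iic_FTC_nonneg[of b "gibbs_weight \<alpha>" _ 0] \<alpha> gibbs_weight_at_bot
      isCont_abs_powr[of "\<alpha> - 1"] isCont_gibbs_weight less_imp_le[OF gibbs_weight_pos]
    by auto
qed

lemma integrable_gibbs_weight: "integrable lborel (gibbs_weight \<alpha>)"
proof -
  have "gibbs_weight \<alpha> \<in> borel_measurable borel"
    using isCont_gibbs_weight
    by (intro borel_measurable_continuous_onI continuous_at_imp_continuous_on) auto
  then have meas: "set_borel_measurable lborel A (gibbs_weight \<alpha>)" if "A \<in> sets lborel" for A
    unfolding set_borel_measurable_def using that by measurable
  have le_moment: "norm (gibbs_weight \<alpha> y) \<le> norm (\<bar>y\<bar> powr (\<alpha> - 1) * gibbs_weight \<alpha> y)"
    if "\<bar>y\<bar> \<ge> 1" for y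
    using \<alpha> ge_one_powr_ge_zero[OF that, of "\<alpha> - 1"] gibbs_weight_pos[of \<alpha> y]
    by (simp add: abs_mult)
  have "set_integrable lborel {1<..} (gibbs_weight \<alpha>)"
    by (rule set_integrable_bound[OF gibbs_moment_Ioi(1)[of 1] meas])
       (simp, simp, intro AE_I2 impI le_moment, simp)
  moreover have "set_integrable lborel {..-1} (gibbs_weight \<alpha>)"
    by (rule set_integrable_bound[OF gibbs_moment_Iic(1)[of "-1"] meas])
       (simp, simp, intro AE_I2 impI le_moment, simp)
  moreover have "set_integrable lborel {-1..1} (gibbs_weight \<alpha>)"
    unfolding set_integrable_def
    by (rule borel_integrable_compact) (auto intro: continuous_at_imp_continuous_on isCont_gibbs_weight)
  ultimately have "set_integrable lborel ({..-1} \<union> {-1..1} \<union> {1<..}) (gibbs_weight \<alpha>)"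
    by (intro set_integrable_Un) auto
  moreover have "{..-1} \<union> {-1..1} \<union> {1<..} = (UNIV :: real set)" by auto
  ultimately show ?thesis by (simp add: set_integrable_def)
qed


lemma gibbs_mass_Iic_add_Ioi:
  "(LBINT y:{..x}. gibbs_weight \<alpha> y) + (LBINT y:{x<..}. gibbs_weight \<alpha> y) = Zc \<alpha>"
  using set_integral_Iic_add_Ioi[OF integrable_gibbs_weight] by (simp add: Zc_eq_integral)

lemma gibbs_mass_Iic_bounds:
  "0 < (LBINT y:{..x}. gibbs_weight \<alpha> y)" "(LBINT y:{..x}. gibbs_weight \<alpha> y) < Zc \<alpha>"
proof -
  have mono: "strict_mono (\<lambda>x. LBINT y:{..x}. gibbs_weight \<alpha> y)"
    by (rule strict_mono_set_integral_Iic[OF integrable_gibbs_weight isCont_gibbs_weight gibbs_weight_pos])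
  have nonneg: "0 \<le> (LBINT y:A. gibbs_weight \<alpha> y)" for A
    by (rule set_integral_nonneg) (simp add: less_imp_le gibbs_weight_pos)
  show "0 < (LBINT y:{..x}. gibbs_weight \<alpha> y)"
    using strict_monoD[OF mono, of "x - 1" x] nonneg[of "{..x - 1}"] by simp
  show "(LBINT y:{..x}. gibbs_weight \<alpha> y) < Zc \<alpha>"
    using strict_monoD[OF mono, of x "x + 1"] nonneg[of "{x + 1<..}"] gibbs_mass_Iic_add_Ioi[of "x + 1"]
    by simp
qed

lemma Zc_pos: "Zc \<alpha> > 0"
  using gibbs_mass_Iic_bounds[of 0] by simp

lemma H_has_real_derivative: "(H \<alpha> has_real_derivative gibbs_weight \<alpha> x / Zc \<alpha>) (at x)"
  unfolding H_eq_set_integral[abs_def]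
  by (intro DERIV_cdivide has_real_derivative_set_integral_Iic integrable_gibbs_weight isCont_gibbs_weight)

lemma inj_H: "inj (H \<alpha>)"
proof (rule strict_mono_imp_inj_on)
  show "strict_mono (H \<alpha>)"
    using strict_mono_set_integral_Iic[OF integrable_gibbs_weight isCont_gibbs_weight gibbs_weight_pos] Zc_pos
    by (simp add: strict_mono_def H_eq_set_integral divide_strict_right_mono)
qed

lemma H_bounds: "0 < H \<alpha> x" "H \<alpha> x < 1"
  using gibbs_mass_Iic_bounds[of x] Zc_pos by (simp_all add: H_eq_set_integral)

lemma Zc_mul_min_H:
  "Zc \<alpha> * min (H \<alpha> x) (1 - H \<alpha> x)
     = min (LBINT y:{..x}. gibbs_weight \<alpha> y) (LBINT y:{x<..}. gibbs_weight \<alpha> y)"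
  using Zc_pos gibbs_mass_Iic_add_Ioi[of x]
  by (simp add: min_mult_distrib_left H_eq_set_integral right_diff_distrib)

lemma gibbs_mass_Ioi_le:
  assumes "x > 0"
  shows "(LBINT y:{x<..}. gibbs_weight \<alpha> y) \<le> gibbs_weight \<alpha> x / x powr (\<alpha> - 1)"
proof -
  have "(LBINT y:{x<..}. gibbs_weight \<alpha> y)
      \<le> (LBINT y:{x<..}. \<bar>y\<bar> powr (\<alpha> - 1) * gibbs_weight \<alpha> y / x powr (\<alpha> - 1))"
  proof (rule set_integral_mono)
    show "set_integrable lborel {x<..} (gibbs_weight \<alpha>)"
      by (simp add: set_integrable_of_integrable integrable_gibbs_weight)
    show "set_integrable lborel {x<..} (\<lambda>y. \<bar>y\<bar> powr (\<alpha> - 1) * gibbs_weight \<alpha> y / x powr (\<alpha> - 1))"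
      using gibbs_moment_Ioi(1)[of x] assms by simp
  next
    fix y assume "y \<in> {x<..}"
    then have "x powr (\<alpha> - 1) \<le> \<bar>y\<bar> powr (\<alpha> - 1)"
      using assms \<alpha> by (intro powr_mono2) auto
    then show "gibbs_weight \<alpha> y \<le> \<bar>y\<bar> powr (\<alpha> - 1) * gibbs_weight \<alpha> y / x powr (\<alpha> - 1)"
      using assms gibbs_weight_pos[of \<alpha> y] by (simp add: field_simps)
  qed
  also have "\<dots> = gibbs_weight \<alpha> x / x powr (\<alpha> - 1)"
    using gibbs_moment_Ioi(2)[of x] assms by simp
  finally show ?thesis .
qed

lemma gibbs_mass_Iic_le:
  assumes "x < 0"
  shows "(LBINT y:{..x}. gibbs_weight \<alpha> y) \<le> gibbs_weight \<alpha> x / \<bar>x\<bar> powr (\<alpha> - 1)"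
proof -
  have "(LBINT y:{..x}. gibbs_weight \<alpha> y)
      \<le> (LBINT y:{..x}. \<bar>y\<bar> powr (\<alpha> - 1) * gibbs_weight \<alpha> y / \<bar>x\<bar> powr (\<alpha> - 1))"
  proof (rule set_integral_mono)
    show "set_integrable lborel {..x} (gibbs_weight \<alpha>)"
      by (simp add: set_integrable_of_integrable integrable_gibbs_weight)
    show "set_integrable lborel {..x} (\<lambda>y. \<bar>y\<bar> powr (\<alpha> - 1) * gibbs_weight \<alpha> y / \<bar>x\<bar> powr (\<alpha> - 1))"
      using gibbs_moment_Iic(1)[of x] assms by simp
  next
    fix y assume "y \<in> {..x}"
    then have "\<bar>x\<bar> powr (\<alpha> - 1) \<le> \<bar>y\<bar> powr (\<alpha> - 1)"
      using assms \<alpha> by (intro powr_mono2) auto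
    then show "gibbs_weight \<alpha> y \<le> \<bar>y\<bar> powr (\<alpha> - 1) * gibbs_weight \<alpha> y / \<bar>x\<bar> powr (\<alpha> - 1)"
      using assms gibbs_weight_pos[of \<alpha> y] by (simp add: field_simps)
  qed
  also have "\<dots> = gibbs_weight \<alpha> x / \<bar>x\<bar> powr (\<alpha> - 1)"
    using gibbs_moment_Iic(2)[of x] assms by simp
  finally show ?thesis .
qed


lemma gibbs_weight_ge_exp_neg_1:
  assumes "\<bar>x\<bar> \<le> 1"
  shows "gibbs_weight \<alpha> x \<ge> exp (- 1)"
proof -
  have "\<bar>x\<bar> powr \<alpha> \<le> 1" using assms \<alpha> by (intro powr_le1) auto
  then have "V \<alpha> x \<le> 1" using \<alpha> by (simp add: V_def)
  then show ?thesis by (simp add: gibbs_weight_def)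
qed

lemma min_gibbs_mass_le:
  "min (LBINT y:{..x}. gibbs_weight \<alpha> y) (LBINT y:{x<..}. gibbs_weight \<alpha> y)
     \<le> 2 * (1 + Zc \<alpha> * exp 1) * gibbs_weight \<alpha> x / (\<bar>x\<bar> powr (\<alpha> - 1) + 1)"
    (is "?m \<le> 2 * ?K * ?w / (?p + 1)")
proof -
  have w: "?w > 0" by (rule gibbs_weight_pos)
  have small_x: "?m \<le> 2 * (Zc \<alpha> * exp 1) * ?w / (?p + 1)" if small: "\<bar>x\<bar> \<le> 1"
  proof -
    have "?m \<le> Zc \<alpha>" using gibbs_mass_Iic_bounds[of x] by linarith
    also have "\<dots> \<le> Zc \<alpha> * (exp 1 * ?w)"
      using gibbs_weight_ge_exp_neg_1[OF small] Zc_pos by (simp add: exp_minus field_simps)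
    also have "\<dots> \<le> 2 * (Zc \<alpha> * exp 1) * ?w / (?p + 1)"
    proof -
      have "?p + 1 \<le> 2" using powr_le1[of "\<alpha> - 1" "\<bar>x\<bar>"] small \<alpha> by simp
      then have "Zc \<alpha> * exp 1 * ?w * (?p + 1) \<le> Zc \<alpha> * exp 1 * ?w * 2"
        using Zc_pos w by (intro mult_left_mono) auto
      then show ?thesis by (simp add: le_divide_eq add_nonneg_pos mult.commute mult.left_commute)
    qed
    finally show ?thesis .
  qed
  have large_x: "?m \<le> 2 * 1 * ?w / (?p + 1)" if large: "\<bar>x\<bar> > 1"
  proof -
    have "?m \<le> ?w / ?p"
      using large gibbs_mass_Ioi_le[of x] gibbs_mass_Iic_le[of x] by (cases "x > 0") auto
    also have "\<dots> \<le> 2 * 1 * ?w / (?p + 1)"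
      using ge_one_powr_ge_zero[of "\<bar>x\<bar>" "\<alpha> - 1"] large \<alpha> w by (simp add: field_simps)
    finally show ?thesis .
  qed
  have enlarge: "2 * c * ?w / (?p + 1) \<le> 2 * ?K * ?w / (?p + 1)" if "c \<le> ?K" for c
    using that w by (intro divide_right_mono mult_right_mono) auto
  show ?thesis
  proof (cases "\<bar>x\<bar> \<le> 1")
    case True
    then show ?thesis using small_x enlarge[of "Zc \<alpha> * exp 1"] by linarith
  next
    case False
    then show ?thesis using large_x enlarge[of 1] Zc_pos by force
  qed
qed

end

theorem lemma3p5:
  fixes \<alpha> :: real and t :: "real \<Rightarrow> real"
  assumes "\<alpha> > 1"
    and "\<And>x. G x = H \<alpha> (t x)"
  shows "\<exists>C>0. \<forall>x. t differentiable (at (inv t x)) \<and>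
           \<bar>deriv t (inv t x)\<bar> \<le> C / (deriv (V \<alpha>) \<bar>x\<bar> + 1)"
proof (intro exI conjI allI)
  note \<alpha> = assms(1) and GHt = assms(2)
  define C where "C = 2 * (1 + Zc \<alpha> * exp 1)"
  show "C > 0" using Zc_pos[OF \<alpha>] by (simp add: C_def add_pos_nonneg)
  fix x
  have "range (H \<alpha>) \<subseteq> range G"
    using H_bounds[OF \<alpha>] range_G by fastforce
  then have "surj t"
    using rearrangement_surj[of "H \<alpha>" G t] inj_H[OF \<alpha>] GHt by blast
  then obtain s where s: "t s = x" "inv t x = s"
    by (metis surj_f_inv_f surjD)
  have "(t has_real_derivative laplace_density s / (gibbs_weight \<alpha> (t s) / Zc \<alpha>)) (at s)"
    using gibbs_weight_pos[of \<alpha> "t s"] Zc_pos[OF \<alpha>]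
    by (intro rearrangement_has_real_derivative[OF inj_H[OF \<alpha>] H_has_real_derivative[OF \<alpha>] _
          G_has_real_derivative GHt]) simp
  then have t': "(t has_real_derivative Zc \<alpha> * laplace_density s / gibbs_weight \<alpha> x) (at s)"
    using s(1) by (simp add: mult.commute)
  have "Zc \<alpha> * laplace_density s
      = min (LBINT y:{..x}. gibbs_weight \<alpha> y) (LBINT y:{x<..}. gibbs_weight \<alpha> y)"
    using Zc_mul_min_H[OF \<alpha>, of x] by (simp add: laplace_density_eq_min GHt s(1))
  also have "\<dots> \<le> C * gibbs_weight \<alpha> x / (\<bar>x\<bar> powr (\<alpha> - 1) + 1)"
    unfolding C_def by (rule min_gibbs_mass_le[OF \<alpha>])
  finally have "\<bar>deriv t s\<bar> \<le> C / (\<bar>x\<bar> powr (\<alpha> - 1) + 1)"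
    using DERIV_imp_deriv[OF t'] gibbs_weight_pos[of \<alpha> x] laplace_density_pos[of s] Zc_pos[OF \<alpha>]
    by (simp add: divide_le_eq pos_le_divide_eq add_nonneg_pos mult.commute)
  then show "\<bar>deriv t (inv t x)\<bar> \<le> C / (deriv (V \<alpha>) \<bar>x\<bar> + 1)"
    using s(2) deriv_V_abs[OF \<alpha>] by simp
  show "t differentiable (at (inv t x))"
    using t' s(2) real_differentiable_def by auto
qed

end
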